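(* Let $\mathbb{V}$ be the variety in the language consisting of one binary operation symbol $*$ and two constant symbols $p$ and $0$, defined by the laws (writing $a*b*c$ for $(a*b)*c$) $$0*x = x*0 = 0,\qquad x*y*z = x*z*y,\qquad x*(y*z) = 0,\qquad x*y*y = 0.$$ Then for every integer $n \ge 0$, the free algebra in $\mathbb{V}$ on $n$ free generators has exactly $1 + (n+1)\cdot 2^{n+1}$ elements. In particular, $\mathbb{V}$ is locally finite. *)

theory Defs
  imports Main
begin

datatype trm = Var nat | Mul trm trm | P | Zero

primrec vars :: "trm \<Rightarrow> nat set" where
  "vars (Var i) = {i}"
| "vars (Mul s t) = vars s \<union> vars t"
| "vars P = {}"
| "vars Zero = {}"

primrec subst :: "(nat \<Rightarrow> trm) \<Rightarrow> trm \<Rightarrow> trm" where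
  "subst \<sigma> (Var i) = \<sigma> i"
| "subst \<sigma> (Mul s t) = Mul (subst \<sigma> s) (subst \<sigma> t)"
| "subst \<sigma> P = P"
| "subst \<sigma> Zero = Zero"

inductive law :: "trm \<Rightarrow> trm \<Rightarrow> bool" where
  "law (Mul Zero (Var 0)) Zero"
| "law (Mul (Var 0) Zero) Zero"
| "law (Mul (Mul (Var 0) (Var 1)) (Var 2)) (Mul (Mul (Var 0) (Var 2)) (Var 1))"
| "law (Mul (Var 0) (Mul (Var 1) (Var 2))) Zero"
| "law (Mul (Mul (Var 0) (Var 1)) (Var 1)) Zero"

inductive eqV :: "trm \<Rightarrow> trm \<Rightarrow> bool" where
  eqV_law: "law s t \<Longrightarrow> eqV (subst \<sigma> s) (subst \<sigma> t)"
| eqV_refl: "eqV t t"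
| eqV_sym: "eqV s t \<Longrightarrow> eqV t s"
| eqV_trans: "eqV s t \<Longrightarrow> eqV t u \<Longrightarrow> eqV s u"
| eqV_cong: "eqV s s' \<Longrightarrow> eqV t t' \<Longrightarrow> eqV (Mul s t) (Mul s' t')"

definition terms :: "nat \<Rightarrow> trm set" where
  "terms n = {t. vars t \<subseteq> {..<n}}"

definition free_alg :: "nat \<Rightarrow> trm set set" where
  "free_alg n = terms n // {(s, t). eqV s t}"

end

theory Submission
  imports Defs "HOL-Library.Multiset"
begin

text \<open>Call the generators and p atoms. Modulo the laws every term equals either 0 or a monomial
  a * b1 * ... * bk of atoms with pairwise distinct bi; since right factors commute,
  the monomial depends only on the pair (a, {b1, ..., bk}). Conversely, these pairs together
  with 0 form an algebra of V under (a, S) * (b, {}) = (a, S \<union> {b}) for b \<notin> S and all other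
  products 0, so evaluating in it separates distinct normal forms. With n + 1 atoms there are
  1 + (n + 1) 2^(n + 1) normal forms.\<close>

text \<open>None encodes 0 and Some (a, S) the monomial a * b1 * ... * bk with S = {b1, ..., bk}.\<close>
type_synonym nf_val = "(trm \<times> trm set) option"

definition nf_mul :: "nf_val \<Rightarrow> nf_val \<Rightarrow> nf_val" where
  "nf_mul v w = (case v of None \<Rightarrow> None | Some (a, S) \<Rightarrow>
     (case w of None \<Rightarrow> None | Some (b, T) \<Rightarrow>
        (if T = {} \<and> b \<notin> S then Some (a, insert b S) else None)))"

primrec nf_eval :: "(nat \<Rightarrow> nf_val) \<Rightarrow> trm \<Rightarrow> nf_val" where
  "nf_eval e (Var i) = e i"
| "nf_eval e (Mul s t) = nf_mul (nf_eval e s) (nf_eval e t)"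
| "nf_eval e P = Some (P, {})"
| "nf_eval e Zero = None"

definition nf :: "trm \<Rightarrow> nf_val" where
  "nf = nf_eval (\<lambda>i. Some (Var i, {}))"

lemma nf_eval_subst: "nf_eval e (subst \<sigma> t) = nf_eval (nf_eval e \<circ> \<sigma>) t"
  by (induction t) auto

lemma law_nf_eval: "law s t \<Longrightarrow> nf_eval e s = nf_eval e t"
  by (induction rule: law.induct) (auto simp: nf_mul_def split: option.splits prod.splits)

lemma eqV_nf_eval: "eqV s t \<Longrightarrow> nf_eval e s = nf_eval e t"
  by (induction rule: eqV.induct) (simp_all add: nf_eval_subst law_nf_eval)

lemma eqV_nf: "eqV s t \<Longrightarrow> nf s = nf t"
  unfolding nf_def by (rule eqV_nf_eval)

declare eqV_trans [trans]

lemma eqV_Mul_Zero_left: "eqV (Mul Zero x) Zero"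
  using eqV_law[OF law.intros(1), of "\<lambda>_. x"] by simp

lemma eqV_Mul_Zero_right: "eqV (Mul x Zero) Zero"
  using eqV_law[OF law.intros(2), of "\<lambda>_. x"] by simp

lemma eqV_Mul_right_commute: "eqV (Mul (Mul x y) z) (Mul (Mul x z) y)"
  using eqV_law[OF law.intros(3), of "\<lambda>i. if i = 0 then x else if i = 1 then y else z"] by simp

lemma eqV_Mul_Mul_right: "eqV (Mul x (Mul y z)) Zero"
  using eqV_law[OF law.intros(4), of "\<lambda>i. if i = 0 then x else if i = 1 then y else z"] by simp

lemma eqV_Mul_square_right: "eqV (Mul (Mul x y) y) Zero"
  using eqV_law[OF law.intros(5), of "\<lambda>i. if i = 0 then x else y"] by simp

lemma eqV_Mul_foldl_Mul: "eqV (Mul (foldl Mul u ds) x) (foldl Mul (Mul u x) ds)"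
proof (induction ds rule: rev_induct)
  case Nil
  show ?case by (simp add: eqV_refl)
next
  case (snoc d ds)
  have "eqV (Mul (Mul (foldl Mul u ds) d) x) (Mul (Mul (foldl Mul u ds) x) d)"
    by (rule eqV_Mul_right_commute)
  also have "eqV (Mul (Mul (foldl Mul u ds) x) d) (Mul (foldl Mul (Mul u x) ds) d)"
    by (rule eqV_cong[OF snoc eqV_refl])
  finally show ?case by simp
qed

lemma eqV_foldl_Mul_perm: "mset bs = mset cs \<Longrightarrow> eqV (foldl Mul a bs) (foldl Mul a cs)"
proof (induction bs arbitrary: cs rule: rev_induct)
  case Nil
  then show ?case by (simp add: eqV_refl)
next
  case (snoc x bs)
  then have "x \<in> set cs" by (metis mset_eq_setD in_set_conv_decomp)
  then obtain c1 c2 where cs: "cs = c1 @ x # c2" by (meson split_list)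
  then have "mset bs = mset (c1 @ c2)" using snoc.prems by simp
  from eqV_cong[OF snoc.IH[OF this] eqV_refl[of x]]
  have "eqV (foldl Mul a (bs @ [x])) (Mul (foldl Mul a (c1 @ c2)) x)" by simp
  also have "eqV (Mul (foldl Mul a (c1 @ c2)) x) (foldl Mul a cs)"
    using eqV_Mul_foldl_Mul[of "foldl Mul a c1" c2 x] cs by simp
  finally show ?case .
qed

lemma eqV_foldl_Mul_repeat:
  assumes "b \<in> set bs"
  shows "eqV (Mul (foldl Mul a bs) b) Zero"
proof -
  from assms obtain b1 b2 where "bs = b1 @ b # b2" by (meson split_list)
  then have "eqV (foldl Mul a bs) (Mul (foldl Mul a (b1 @ b2)) b)"
    using eqV_foldl_Mul_perm[of bs "(b1 @ b2) @ [b]"] by simp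
  then have "eqV (Mul (foldl Mul a bs) b) (Mul (Mul (foldl Mul a (b1 @ b2)) b) b)"
    by (rule eqV_cong[OF _ eqV_refl])
  also have "eqV \<dots> Zero" by (rule eqV_Mul_square_right)
  finally show ?thesis .
qed

lemma eqV_Mul_foldl_Mul_Zero: "bs \<noteq> [] \<Longrightarrow> eqV (Mul s (foldl Mul b bs)) Zero"
  by (cases bs rule: rev_cases) (simp_all add: eqV_Mul_Mul_right)

definition monomials :: "nf_val \<Rightarrow> trm set" where
  "monomials v = (case v of None \<Rightarrow> {Zero}
     | Some (a, S) \<Rightarrow> {foldl Mul a bs | bs. distinct bs \<and> set bs = S})"

lemma eqV_monomials: "r \<in> monomials v \<Longrightarrow> r' \<in> monomials v \<Longrightarrow> eqV r r'"
  by (auto simp: monomials_def eqV_refl set_eq_iff_mset_eq_distinct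
      intro: eqV_foldl_Mul_perm split: option.splits)

lemma monomials_Mul:
  assumes "r \<in> monomials v" and "r' \<in> monomials w"
  shows "\<exists>r'' \<in> monomials (nf_mul v w). eqV (Mul r r') r''"
proof (cases v)
  case None
  then show ?thesis using assms by (simp add: monomials_def nf_mul_def eqV_Mul_Zero_left)
next
  case (Some v')
  then obtain a S bs where v: "v = Some (a, S)" and bs: "distinct bs" "set bs = S"
    and r: "r = foldl Mul a bs" using assms(1) by (auto simp: monomials_def split: prod.splits)
  show ?thesis
  proof (cases w)
    case None
    then show ?thesis using assms v by (simp add: monomials_def nf_mul_def eqV_Mul_Zero_right)
  next
    case (Some w')
    then obtain b cs where w: "w = Some (b, set cs)" and r': "r' = foldl Mul b cs"
      using assms(2) by (auto simp: monomials_def split: prod.splits)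
    show ?thesis
    proof (cases "cs = [] \<and> b \<notin> S")
      case True
      then have "foldl Mul a (bs @ [b]) \<in> monomials (nf_mul v w)"
        using v w bs by (auto simp: monomials_def nf_mul_def intro!: exI[of _ "bs @ [b]"])
      then show ?thesis using True r r' by (auto intro: eqV_refl)
    next
      case False
      have "eqV (Mul r r') Zero"
      proof (cases "cs = []")
        case True
        then show ?thesis using False r r' bs by (simp add: eqV_foldl_Mul_repeat)
      qed (simp add: r' eqV_Mul_foldl_Mul_Zero)
      moreover have "nf_mul v w = None" using False v w by (auto simp: nf_mul_def)
      ultimately show ?thesis by (simp add: monomials_def)
    qed
  qed
qed

lemma eqV_monomial_nf: "\<exists>r \<in> monomials (nf t). eqV t r"
proof (induction t)
  case (Mul s u)
  then obtain r r' where "r \<in> monomials (nf s)" "eqV s r" "r' \<in> monomials (nf u)" "eqV u r'"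
    by blast
  then obtain r'' where "r'' \<in> monomials (nf (Mul s u))" "eqV (Mul r r') r''"
    using monomials_Mul by (fastforce simp: nf_def)
  moreover have "eqV (Mul s u) (Mul r r')" by (rule eqV_cong) fact+
  ultimately show ?case by (blast intro: eqV_trans)
qed (auto simp: nf_def monomials_def intro!: exI[of _ "[]"] eqV_refl)

lemma eqV_iff_nf_eq: "eqV s t \<longleftrightarrow> nf s = nf t"
proof
  assume "nf s = nf t"
  then obtain r r' where "eqV s r" "eqV t r'" "r \<in> monomials (nf s)" "r' \<in> monomials (nf s)"
    using eqV_monomial_nf by metis
  then show "eqV s t" by (metis eqV_monomials eqV_sym eqV_trans)
qed (rule eqV_nf)

definition atoms :: "nat \<Rightarrow> trm set" where
  "atoms n = insert P (Var ` {..<n})"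

lemma finite_atoms: "finite (atoms n)"
  by (simp add: atoms_def)

lemma card_atoms: "card (atoms n) = n + 1"
proof -
  have "card (Var ` {..<n}) = n" by (simp add: card_image inj_on_def)
  moreover have "P \<notin> Var ` {..<n}" by auto
  ultimately show ?thesis by (simp add: atoms_def)
qed

lemma nf_in_atoms: "vars t \<subseteq> {..<n} \<Longrightarrow> nf t = Some (a, S) \<Longrightarrow> a \<in> atoms n \<and> S \<subseteq> atoms n"
proof (induction t arbitrary: a S)
  case (Mul s u)
  then show ?case
    by (auto simp: nf_def nf_mul_def atoms_def split: option.splits prod.splits if_splits)
qed (auto simp: nf_def atoms_def)

lemma nf_foldl_Mul_atoms:
  "a \<in> atoms n \<Longrightarrow> distinct bs \<Longrightarrow> set bs \<subseteq> atoms n \<Longrightarrow>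
    nf (foldl Mul a bs) = Some (a, set bs) \<and> vars (foldl Mul a bs) \<subseteq> {..<n}"
proof (induction bs rule: rev_induct)
  case Nil
  then show ?case by (auto simp: nf_def atoms_def)
next
  case (snoc b bs)
  have "nf b = Some (b, {})" "vars b \<subseteq> {..<n}" using snoc.prems by (auto simp: nf_def atoms_def)
  then show ?case using snoc by (auto simp: nf_def nf_mul_def)
qed

lemma nf_image_terms: "nf ` terms n = insert None (Some ` (atoms n \<times> Pow (atoms n)))"
proof (intro equalityI image_subsetI subsetI)
  fix t assume "t \<in> terms n"
  then show "nf t \<in> insert None (Some ` (atoms n \<times> Pow (atoms n)))"
    using nf_in_atoms[of t n] by (cases "nf t") (auto simp: terms_def)
next
  fix v assume v: "v \<in> insert None (Some ` (atoms n \<times> Pow (atoms n)))"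
  show "v \<in> nf ` terms n"
  proof (cases v)
    case None
    have "nf Zero = None" "Zero \<in> terms n" by (auto simp: nf_def terms_def)
    then show ?thesis using None by (metis rev_image_eqI)
  next
    case (Some w)
    then obtain a S where aS: "v = Some (a, S)" "a \<in> atoms n" "S \<subseteq> atoms n" using v by auto
    then have "finite S" using finite_atoms finite_subset by blast
    then obtain bs where "distinct bs" "set bs = S" using finite_distinct_list by blast
    then have "nf (foldl Mul a bs) = v" "foldl Mul a bs \<in> terms n"
      using nf_foldl_Mul_atoms[OF aS(2)] aS by (auto simp: terms_def)
    then show ?thesis by (metis rev_image_eqI)
  qed
qed

theorem mainTheorem2:
  fixes n :: nat
  shows "finite (free_alg n) \<and> card (free_alg n) = 1 + (n + 1) * 2 ^ (n + 1)"
proof -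
  have "free_alg n = terms n // kernel nf"
    by (simp add: free_alg_def kernel_def eqV_iff_nf_eq)
  then have bij: "bij_betw (\<lambda>v. nf -` {v}) (nf ` terms n) (free_alg n)"
    using bij_betw_image_quotient_kernel by metis
  from finite_atoms have "finite (nf ` terms n)" and "card (nf ` terms n) = 1 + (n + 1) * 2 ^ (n + 1)"
    by (simp_all add: nf_image_terms card_image card_cartesian_product card_Pow card_atoms)
  then show ?thesis using bij_betw_finite[OF bij] bij_betw_same_card[OF bij] by simp
qed

end
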